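(* Let $R$ be a ring and $S\in\max\mathrm{Den}_l(R)$. Then the ring $S^{-1}R$ is a division ring if and only if $R=S\cup\mathrm{ass}(S)$.
   Context: All rings are associative with $1$. A multiplicative subset $S$ of $R$ ($1\in S$, $0\notin S$, closed under multiplication) is a left Ore set if $Sr\cap Rs\neq\emptyset$ for all $r\in R$, $s\in S$; for it, $\mathrm{ass}(S):=\{r\in R: sr=0\text{ for some } s\in S\}$. A left Ore set $S$ is a left denominator set if $rs=0$ ($r\in R$, $s\in S$) implies $tr=0$ for some $t\in S$; $S^{-1}R$ is the left localization. $\max\mathrm{Den}_l(R)$ is the set of maximal elements, under inclusion, of the set of left denominator sets of $R$. *)

theory Defs
  imports "HOL-Algebra.Ring"
begin

text \<open>The ambient ring R is the whole type 'a (of class ring_1); subsets of R are sets of type 'a set.\<close>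

definition mult_subset :: "'a::ring_1 set \<Rightarrow> bool" where
  "mult_subset S \<longleftrightarrow> 1 \<in> S \<and> 0 \<notin> S \<and> (\<forall>a\<in>S. \<forall>b\<in>S. a * b \<in> S)"

definition left_ore :: "'a::ring_1 set \<Rightarrow> bool" where
  "left_ore S \<longleftrightarrow> mult_subset S \<and>
     (\<forall>r s. s \<in> S \<longrightarrow> (\<exists>t\<in>S. \<exists>a. t * r = a * s))"

definition ass :: "'a::ring_1 set \<Rightarrow> 'a set" where
  "ass S = {r. \<exists>s\<in>S. s * r = 0}"

definition left_den :: "'a::ring_1 set \<Rightarrow> bool" where
  "left_den S \<longleftrightarrow> left_ore S \<and>
     (\<forall>r s. s \<in> S \<and> r * s = 0 \<longrightarrow> (\<exists>t\<in>S. t * r = 0))"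

definition maxDen_l :: "'a::ring_1 set set" where
  "maxDen_l = {S. left_den S \<and> (\<forall>T. left_den T \<and> S \<subseteq> T \<longrightarrow> T = S)}"

text \<open>Left fractions: a pair (s, r) with s in S stands for s^{-1} r.
  (s, r) ~ (s', r') iff a s = a' s' \<in> S and a r = a' r' for some a, a'.\<close>

definition loc_rel :: "'a::ring_1 set \<Rightarrow> (('a \<times> 'a) \<times> ('a \<times> 'a)) set" where
  "loc_rel S = {((s, r), (s', r')). s \<in> S \<and> s' \<in> S \<and>
      (\<exists>a a'. a * s = a' * s' \<and> a * s \<in> S \<and> a * r = a' * r')}"

definition loc_class :: "'a::ring_1 set \<Rightarrow> 'a \<Rightarrow> 'a \<Rightarrow> ('a \<times> 'a) set" where
  "loc_class S s r = loc_rel S `` {(s, r)}"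

text \<open>s^{-1}r + s'^{-1}r' = (t s)^{-1}(t r + a r') where t s = a s', t \<in> S.\<close>
definition loc_add :: "'a::ring_1 set \<Rightarrow> ('a \<times> 'a) set \<Rightarrow> ('a \<times> 'a) set \<Rightarrow> ('a \<times> 'a) set" where
  "loc_add S X Y = (SOME Z. \<exists>s r s' r' t a. (s, r) \<in> X \<and> (s', r') \<in> Y \<and>
      t \<in> S \<and> t * s = a * s' \<and> Z = loc_class S (t * s) (t * r + a * r'))"

text \<open>(s^{-1}r)(s'^{-1}r') = (u s)^{-1}(v r') where u r = v s', u \<in> S.\<close>
definition loc_mult :: "'a::ring_1 set \<Rightarrow> ('a \<times> 'a) set \<Rightarrow> ('a \<times> 'a) set \<Rightarrow> ('a \<times> 'a) set" where
  "loc_mult S X Y = (SOME Z. \<exists>s r s' r' u v. (s, r) \<in> X \<and> (s', r') \<in> Y \<and>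
      u \<in> S \<and> u * r = v * s' \<and> Z = loc_class S (u * s) (v * r'))"

definition left_loc :: "'a::ring_1 set \<Rightarrow> ('a \<times> 'a) set ring" where
  "left_loc S = \<lparr> carrier = (S \<times> UNIV) // loc_rel S,
                   monoid.mult = loc_mult S,
                   one = loc_class S 1 1,
                   zero = loc_class S 1 0,
                   add = loc_add S \<rparr>"

definition division_ring :: "('b, 'm) ring_scheme \<Rightarrow> bool" where
  "division_ring K \<longleftrightarrow> ring K \<and> \<one>\<^bsub>K\<^esub> \<noteq> \<zero>\<^bsub>K\<^esub> \<and>
     (\<forall>x \<in> carrier K - {\<zero>\<^bsub>K\<^esub>}. x \<in> Units K)"

end

theory Submission
  imports Defs
begin

text \<open>Let \<open>\<iota> : R \<rightarrow> S\<^sup>-\<^sup>1R\<close> be the canonical map. The set \<open>T = \<iota>\<^sup>-\<^sup>1(units)\<close> is always a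
  left denominator set containing \<open>S\<close>: Ore's condition for \<open>t \<in> T\<close> comes from writing
  \<open>\<iota> r \<iota>(t)\<^sup>-\<^sup>1\<close> as a left fraction \<open>s\<^sup>-\<^sup>1x\<close>, and \<open>r t = 0\<close> forces \<open>\<iota> r = 0\<close>, i.e. \<open>r \<in> ass(S)\<close>.
  If \<open>S\<^sup>-\<^sup>1R\<close> is a division ring, \<open>T\<close> is the complement of \<open>ass(S)\<close>, so maximality of \<open>S\<close>
  gives \<open>R = S \<union> ass(S)\<close>. Conversely, if \<open>R = S \<union> ass(S)\<close>, a nonzero fraction \<open>s\<^sup>-\<^sup>1r\<close> has
  \<open>r \<in> S\<close>, and \<open>r\<^sup>-\<^sup>1s\<close> is its inverse.\<close>

locale left_denominator_set =
  fixes S :: "'a::ring_1 set"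
  assumes left_den: "left_den S"
begin

abbreviation L :: "('a \<times> 'a) set ring" where "L \<equiv> left_loc S"

abbreviation embed :: "'a \<Rightarrow> ('a \<times> 'a) set" where "embed r \<equiv> loc_class S 1 r"

lemma one_mem: "1 \<in> S"
  and zero_not_mem: "0 \<notin> S"
  and mult_mem: "a \<in> S \<Longrightarrow> b \<in> S \<Longrightarrow> a * b \<in> S"
  and ore: "s \<in> S \<Longrightarrow> \<exists>t\<in>S. \<exists>a. t * r = a * s"
  and annihilator: "s \<in> S \<Longrightarrow> r * s = 0 \<Longrightarrow> \<exists>t\<in>S. t * r = 0"
  using left_den by (auto simp: left_den_def left_ore_def mult_subset_def)

lemma right_cancel:
  assumes "s \<in> S" "x * s = y * s"
  obtains e where "e \<in> S" "e * x = e * y"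
proof -
  have "(x - y) * s = 0" using assms(2) by (simp add: left_diff_distrib)
  then obtain e where "e \<in> S" "e * (x - y) = 0" using annihilator assms(1) by blast
  then show thesis using that by (simp add: right_diff_distrib)
qed

lemma S_disjoint_ass: "S \<inter> ass S = {}"
  using zero_not_mem mult_mem by (auto simp: ass_def) metis

subsection \<open>Left fractions\<close>

lemma loc_rel_iff: "((s, r), (s', r')) \<in> loc_rel S \<longleftrightarrow>
    s \<in> S \<and> s' \<in> S \<and> (\<exists>a a'. a * s = a' * s' \<and> a * s \<in> S \<and> a * r = a' * r')"
  by (simp add: loc_rel_def)

lemma loc_rel_trans:
  assumes "((s1, r1), (s2, r2)) \<in> loc_rel S" and "((s2, r2), (s3, r3)) \<in> loc_rel S"
  shows "((s1, r1), (s3, r3)) \<in> loc_rel S"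
proof -
  from assms(1) obtain a1 a2 where S12: "s1 \<in> S" "s2 \<in> S"
    and e1: "a1 * s1 = a2 * s2" "a1 * s1 \<in> S" "a1 * r1 = a2 * r2"
    by (auto simp: loc_rel_iff)
  from assms(2) obtain b2 b3 where S3: "s3 \<in> S"
    and e2: "b2 * s2 = b3 * s3" "b2 * s2 \<in> S" "b2 * r2 = b3 * r3"
    by (auto simp: loc_rel_iff)
  obtain c d where "c \<in> S" and "c * (b2 * s2) = d * (a2 * s2)"
    using ore[of "a2 * s2" "b2 * s2"] e1 by auto
  then have "(c * b2) * s2 = (d * a2) * s2" by (simp add: mult.assoc)
  then obtain e where "e \<in> S" and "e * (c * b2) = e * (d * a2)" using right_cancel S12 by blast
  then have cancel: "e * d * a2 = e * c * b2" by (simp add: mult.assoc)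
  have mid: "(e * d * a1) * s1 = (e * c) * (b2 * s2)"
  proof -
    have "(e * d * a1) * s1 = (e * d) * (a2 * s2)" using e1 by (simp add: mult.assoc)
    also have "\<dots> = (e * d * a2) * s2" by (simp add: mult.assoc)
    also have "\<dots> = (e * c) * (b2 * s2)" using cancel by (simp add: mult.assoc)
    finally show ?thesis .
  qed
  have "(e * d * a1) * r1 = (e * c * b3) * r3"
  proof -
    have "(e * d * a1) * r1 = (e * d * a2) * r2" using e1 by (simp add: mult.assoc)
    also have "\<dots> = (e * c) * (b2 * r2)" using cancel by (simp add: mult.assoc)
    also have "\<dots> = (e * c * b3) * r3" using e2 by (simp add: mult.assoc)
    finally show ?thesis .
  qed
  moreover have "(e * d * a1) * s1 = (e * c * b3) * s3" using mid e2 by (simp add: mult.assoc)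
  moreover have "(e * d * a1) * s1 \<in> S" using mid \<open>e \<in> S\<close> \<open>c \<in> S\<close> e2 mult_mem by metis
  ultimately show ?thesis using S12 S3 unfolding loc_rel_iff by blast
qed

lemma equiv_loc_rel: "equiv (S \<times> UNIV) (loc_rel S)"
proof (rule equivI)
  show "loc_rel S \<subseteq> (S \<times> UNIV) \<times> (S \<times> UNIV)" by (auto simp: loc_rel_def)
  show "refl_on (S \<times> UNIV) (loc_rel S)"
    unfolding refl_on_def by (auto simp: loc_rel_iff intro!: exI[of _ 1])
  show "sym (loc_rel S)"
    unfolding sym_def by (auto simp: loc_rel_iff) metis
  show "trans (loc_rel S)"
    unfolding trans_def using loc_rel_trans by fast
qed

lemma loc_class_eq_iff:
  "s \<in> S \<Longrightarrow> s' \<in> S \<Longrightarrow> loc_class S s r = loc_class S s' r' \<longleftrightarrow> ((s, r), (s', r')) \<in> loc_rel S"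
  unfolding loc_class_def by (rule eq_equiv_class_iff[OF equiv_loc_rel]) auto

lemma loc_class_eqI:
  "\<lbrakk>s \<in> S; s' \<in> S; a * s = a' * s'; a * s \<in> S; a * r = a' * r'\<rbrakk>
    \<Longrightarrow> loc_class S s r = loc_class S s' r'"
  using loc_class_eq_iff loc_rel_iff by blast

lemma loc_class_scale: "s \<in> S \<Longrightarrow> b * s \<in> S \<Longrightarrow> loc_class S (b * s) (b * r) = loc_class S s r"
  by (rule loc_class_eqI[of _ _ 1 b]) auto

lemma loc_class_self_mem: "s \<in> S \<Longrightarrow> (s, r) \<in> loc_class S s r"
  unfolding loc_class_def by (auto simp: loc_rel_iff intro!: exI[of _ 1])

lemma mem_loc_classE:
  assumes "(s1, r1) \<in> loc_class S s r"
  obtains b' b where "s \<in> S" "s1 \<in> S" "b' * s = b * s1" "b * s1 \<in> S" "b' * r = b * r1"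
  using assms by (auto simp: loc_class_def loc_rel_iff)

lemma carrier_left_loc_iff: "X \<in> carrier L \<longleftrightarrow> (\<exists>s r. s \<in> S \<and> X = loc_class S s r)"
  by (auto simp: left_loc_def quotient_def loc_class_def)

lemma loc_class_closed: "s \<in> S \<Longrightarrow> loc_class S s r \<in> carrier L"
  using carrier_left_loc_iff by blast

lemma left_loc_cases:
  assumes "X \<in> carrier L"
  obtains s r where "s \<in> S" "X = loc_class S s r"
  using assms carrier_left_loc_iff by blast

subsection \<open>Well-definedness of the operations\<close>

text \<open>The one computation behind both well-definedness proofs: two choices of Ore data
  \<open>p\<^sub>i x = q\<^sub>i s'\<close> become equal after a common left multiplier.\<close>

lemma common_multiplier:
  assumes "s \<in> S" "s' \<in> S" "p1 * s \<in> S" "p2 * s \<in> S" "p1 * x = q1 * s'" "p2 * x = q2 * s'"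
  obtains c d where "c * p1 = d * p2" "c * q1 = d * q2" "c * (p1 * s) \<in> S"
proof -
  obtain c0 d0 where c0: "c0 \<in> S" and "c0 * (p1 * s) = d0 * (p2 * s)" using ore assms(4) by blast
  then have "(c0 * p1) * s = (d0 * p2) * s" by (simp add: mult.assoc)
  then obtain e where e: "e \<in> S" and "e * (c0 * p1) = e * (d0 * p2)" using right_cancel assms(1) by blast
  then have ep: "e * c0 * p1 = e * d0 * p2" by (simp add: mult.assoc)
  have "(e * c0 * q1) * s' = (e * c0 * p1) * x" using assms(5) by (simp add: mult.assoc)
  also have "\<dots> = (e * d0 * q2) * s'" using ep assms(6) by (simp add: mult.assoc)
  finally obtain e' where e': "e' \<in> S" and "e' * (e * c0 * q1) = e' * (e * d0 * q2)"
    using right_cancel assms(2) by blast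
  then have "(e' * e * c0) * q1 = (e' * e * d0) * q2" by (simp add: mult.assoc)
  moreover have "(e' * e * c0) * p1 = (e' * e * d0) * p2" using ep by (simp add: mult.assoc)
  moreover have "(e' * e * c0) * (p1 * s) \<in> S" using e' e c0 assms(3) mult_mem by blast
  ultimately show thesis using that by blast
qed

lemma loc_class_add_indep:
  assumes "s \<in> S" "s' \<in> S" "t1 * s \<in> S" "t1 * s = a1 * s'" "t2 * s \<in> S" "t2 * s = a2 * s'"
  shows "loc_class S (t1 * s) (t1 * r + a1 * r') = loc_class S (t2 * s) (t2 * r + a2 * r')"
proof -
  obtain c d where "c * t1 = d * t2" "c * a1 = d * a2" "c * (t1 * s) \<in> S"
    using common_multiplier[OF assms(1-3,5,4,6)] .
  with assms(3,5) show ?thesis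
    by (intro loc_class_eqI[of _ _ c d]) (simp_all add: distrib_left mult.assoc[symmetric])
qed

lemma loc_class_mult_indep:
  assumes "s \<in> S" "s' \<in> S" "u1 * s \<in> S" "u1 * r = v1 * s'" "u2 * s \<in> S" "u2 * r = v2 * s'"
  shows "loc_class S (u1 * s) (v1 * r') = loc_class S (u2 * s) (v2 * r')"
proof -
  obtain c d where "c * u1 = d * u2" "c * v1 = d * v2" "c * (u1 * s) \<in> S"
    using common_multiplier[OF assms(1-3,5,4,6)] .
  with assms(3,5) show ?thesis
    by (intro loc_class_eqI[of _ _ c d]) (simp_all add: mult.assoc[symmetric])
qed

lemma loc_add_rep_indep:
  assumes "(s1, r1) \<in> loc_class S s r" "(s1', r1') \<in> loc_class S s' r'"
    and "t \<in> S" "t * s = a * s'" "t1 \<in> S" "t1 * s1 = a1 * s1'"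
  shows "loc_class S (t1 * s1) (t1 * r1 + a1 * r1') = loc_class S (t * s) (t * r + a * r')"
proof -
  obtain b' b where s: "s \<in> S" "s1 \<in> S" and b: "b' * s = b * s1" "b * s1 \<in> S" "b' * r = b * r1"
    using assms(1) by (rule mem_loc_classE)
  obtain c' c where s': "s' \<in> S" "s1' \<in> S" and c: "c' * s' = c * s1'" "c * s1' \<in> S" "c' * r' = c * r1'"
    using assms(2) by (rule mem_loc_classE)
  obtain t3 a3 where "t3 \<in> S" and t3: "(t3 * b) * s1 = (a3 * c) * s1'"
    using ore[OF c(2), of "b * s1"] by (auto simp: mult.assoc)
  have t3S: "(t3 * b) * s1 \<in> S" using \<open>t3 \<in> S\<close> b(2) mult_mem by (simp add: mult.assoc)
  have "loc_class S (t1 * s1) (t1 * r1 + a1 * r1')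
      = loc_class S ((t3 * b) * s1) ((t3 * b) * r1 + (a3 * c) * r1')"
    using loc_class_add_indep[OF s(2) s'(2) _ assms(6) t3S t3] assms(5) s(2) mult_mem by blast
  also have "\<dots> = loc_class S ((t3 * b') * s) ((t3 * b') * r + (a3 * c') * r')"
    using b c by (simp add: mult.assoc)
  also have "\<dots> = loc_class S (t * s) (t * r + a * r')"
  proof (rule loc_class_add_indep[OF s(1) s'(1) _ _ _ assms(4)])
    show "(t3 * b') * s \<in> S" "(t3 * b') * s = (a3 * c') * s'"
      using t3S t3 b c by (simp_all add: mult.assoc)
    show "t * s \<in> S" using assms(3) s(1) mult_mem by blast
  qed
  finally show ?thesis .
qed

lemma loc_mult_rep_indep:
  assumes "(s1, r1) \<in> loc_class S s r" "(s1', r1') \<in> loc_class S s' r'"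
    and "u * s \<in> S" "u * r = v * s'" "u1 \<in> S" "u1 * r1 = v1 * s1'"
  shows "loc_class S (u1 * s1) (v1 * r1') = loc_class S (u * s) (v * r')"
proof -
  obtain b' b where s: "s \<in> S" "s1 \<in> S" and b: "b' * s = b * s1" "b * s1 \<in> S" "b' * r = b * r1"
    using assms(1) by (rule mem_loc_classE)
  obtain c' c where s': "s' \<in> S" "s1' \<in> S" and c: "c' * s' = c * s1'" "c * s1' \<in> S" "c' * r' = c * r1'"
    using assms(2) by (rule mem_loc_classE)
  obtain u3 v3 where "u3 \<in> S" and u3: "(u3 * b) * r1 = (v3 * c) * s1'"
    using ore[OF c(2), of "b * r1"] by (auto simp: mult.assoc)
  have u3S: "(u3 * b) * s1 \<in> S" using \<open>u3 \<in> S\<close> b(2) mult_mem by (simp add: mult.assoc)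
  have "loc_class S (u1 * s1) (v1 * r1') = loc_class S ((u3 * b) * s1) ((v3 * c) * r1')"
    using loc_class_mult_indep[OF s(2) s'(2) _ assms(6) u3S u3] assms(5) s(2) mult_mem by blast
  also have "\<dots> = loc_class S ((u3 * b') * s) ((v3 * c') * r')"
    using b c by (simp add: mult.assoc)
  also have "\<dots> = loc_class S (u * s) (v * r')"
  proof (rule loc_class_mult_indep[OF s(1) s'(1) _ _ assms(3,4)])
    show "(u3 * b') * s \<in> S" "(u3 * b') * r = (v3 * c') * s'"
      using u3S u3 b c by (simp_all add: mult.assoc)
  qed
  finally show ?thesis .
qed

lemma left_loc_add:
  assumes "s \<in> S" "s' \<in> S" "t \<in> S" "t * s = a * s'"
  shows "loc_class S s r \<oplus>\<^bsub>L\<^esub> loc_class S s' r' = loc_class S (t * s) (t * r + a * r')"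
proof -
  have "loc_add S (loc_class S s r) (loc_class S s' r') = loc_class S (t * s) (t * r + a * r')"
    unfolding loc_add_def
  proof (rule some_equality)
    fix Z assume "\<exists>s1 r1 s1' r1' t1 a1. (s1, r1) \<in> loc_class S s r \<and> (s1', r1') \<in> loc_class S s' r'
      \<and> t1 \<in> S \<and> t1 * s1 = a1 * s1' \<and> Z = loc_class S (t1 * s1) (t1 * r1 + a1 * r1')"
    then show "Z = loc_class S (t * s) (t * r + a * r')"
      using loc_add_rep_indep assms(3,4) by blast
  qed (use assms loc_class_self_mem in blast)
  then show ?thesis by (simp add: left_loc_def)
qed

lemma left_loc_mult:
  assumes "s \<in> S" "s' \<in> S" "u \<in> S" "u * r = v * s'"
  shows "loc_class S s r \<otimes>\<^bsub>L\<^esub> loc_class S s' r' = loc_class S (u * s) (v * r')"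
proof -
  have "loc_mult S (loc_class S s r) (loc_class S s' r') = loc_class S (u * s) (v * r')"
    unfolding loc_mult_def
  proof (rule some_equality)
    fix Z assume "\<exists>s1 r1 s1' r1' u1 v1. (s1, r1) \<in> loc_class S s r \<and> (s1', r1') \<in> loc_class S s' r'
      \<and> u1 \<in> S \<and> u1 * r1 = v1 * s1' \<and> Z = loc_class S (u1 * s1) (v1 * r1')"
    then show "Z = loc_class S (u * s) (v * r')"
      using loc_mult_rep_indep assms mult_mem by blast
  qed (use assms loc_class_self_mem in blast)
  then show ?thesis by (simp add: left_loc_def)
qed

lemma left_loc_add_same_denom: "u \<in> S \<Longrightarrow> loc_class S u x \<oplus>\<^bsub>L\<^esub> loc_class S u y = loc_class S u (x + y)"
  using left_loc_add[of u u 1 1] one_mem by simp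

lemma left_loc_zero: "u \<in> S \<Longrightarrow> \<zero>\<^bsub>L\<^esub> = loc_class S u 0"
  using loc_class_scale[OF one_mem, of u 0] by (simp add: left_loc_def)

lemma left_loc_one: "u \<in> S \<Longrightarrow> \<one>\<^bsub>L\<^esub> = loc_class S u u"
  using loc_class_scale[OF one_mem, of u 1] by (simp add: left_loc_def)

lemma left_loc_denom_multiple:
  assumes "X \<in> carrier L" "u \<in> S"
  obtains t z where "t \<in> S" "X = loc_class S (t * u) z"
proof -
  obtain s r where s: "s \<in> S" and X: "X = loc_class S s r" using assms(1) by (rule left_loc_cases)
  obtain t a where t: "t \<in> S" and ta: "t * u = a * s" using ore[OF s, of u] by blast
  have "a * s \<in> S" using ta t assms(2) mult_mem by metis
  then have "X = loc_class S (t * u) (a * r)" using X loc_class_scale[OF s] ta by simp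
  with t show thesis by (rule that)
qed

lemma left_loc_common_denom:
  assumes "X \<in> carrier L" "Y \<in> carrier L"
  obtains u x y where "u \<in> S" "X = loc_class S u x" "Y = loc_class S u y"
proof -
  obtain s r where s: "s \<in> S" and X: "X = loc_class S s r" using assms(1) by (rule left_loc_cases)
  obtain t y where t: "t \<in> S" and Y: "Y = loc_class S (t * s) y"
    using assms(2) s by (rule left_loc_denom_multiple)
  have ts: "t * s \<in> S" using t s mult_mem by blast
  have "X = loc_class S (t * s) (t * r)" using X loc_class_scale[OF s ts] by simp
  with ts Y show thesis using that by blast
qed

lemma left_loc_common_denom3:
  assumes "X \<in> carrier L" "Y \<in> carrier L" "Z \<in> carrier L"
  obtains u x y z where "u \<in> S" "X = loc_class S u x" "Y = loc_class S u y" "Z = loc_class S u z"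
proof -
  obtain u x y where u: "u \<in> S" and X: "X = loc_class S u x" and Y: "Y = loc_class S u y"
    using assms(1,2) by (rule left_loc_common_denom)
  obtain t z where t: "t \<in> S" and Z: "Z = loc_class S (t * u) z"
    using assms(3) u by (rule left_loc_denom_multiple)
  have tu: "t * u \<in> S" using t u mult_mem by blast
  show thesis by (rule that[OF tu _ _ Z, of "t * x" "t * y"]) (simp_all add: X Y loc_class_scale[OF u tu])
qed

subsection \<open>The ring \<open>S\<^sup>-\<^sup>1R\<close>\<close>

lemma abelian_group_left_loc: "abelian_group L"
proof (rule abelian_groupI)
  fix X Y assume "X \<in> carrier L" "Y \<in> carrier L"
  then obtain u x y where "u \<in> S" "X = loc_class S u x" "Y = loc_class S u y"
    by (rule left_loc_common_denom)
  then show "X \<oplus>\<^bsub>L\<^esub> Y \<in> carrier L" "X \<oplus>\<^bsub>L\<^esub> Y = Y \<oplus>\<^bsub>L\<^esub> X"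
    by (simp_all add: left_loc_add_same_denom loc_class_closed add.commute)
next
  show "\<zero>\<^bsub>L\<^esub> \<in> carrier L" using left_loc_zero[OF one_mem] loc_class_closed[OF one_mem] by simp
next
  fix X Y Z assume "X \<in> carrier L" "Y \<in> carrier L" "Z \<in> carrier L"
  then obtain u x y z where "u \<in> S" "X = loc_class S u x" "Y = loc_class S u y" "Z = loc_class S u z"
    by (rule left_loc_common_denom3)
  then show "X \<oplus>\<^bsub>L\<^esub> Y \<oplus>\<^bsub>L\<^esub> Z = X \<oplus>\<^bsub>L\<^esub> (Y \<oplus>\<^bsub>L\<^esub> Z)"
    by (simp add: left_loc_add_same_denom add.assoc)
next
  fix X assume "X \<in> carrier L"
  then obtain s r where s: "s \<in> S" and X: "X = loc_class S s r" by (rule left_loc_cases)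
  show "\<zero>\<^bsub>L\<^esub> \<oplus>\<^bsub>L\<^esub> X = X" using s X by (simp add: left_loc_zero[OF s] left_loc_add_same_denom)
  have "loc_class S s (- r) \<oplus>\<^bsub>L\<^esub> X = \<zero>\<^bsub>L\<^esub>"
    using s X by (simp add: left_loc_zero[OF s] left_loc_add_same_denom)
  then show "\<exists>Y\<in>carrier L. Y \<oplus>\<^bsub>L\<^esub> X = \<zero>\<^bsub>L\<^esub>" using loc_class_closed[OF s] by blast
qed

lemma left_loc_m_closed: "X \<in> carrier L \<Longrightarrow> Y \<in> carrier L \<Longrightarrow> X \<otimes>\<^bsub>L\<^esub> Y \<in> carrier L"
proof -
  assume "X \<in> carrier L" "Y \<in> carrier L"
  then obtain s r s' r' where s: "s \<in> S" "s' \<in> S" and "X = loc_class S s r" "Y = loc_class S s' r'"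
    by (meson left_loc_cases)
  moreover obtain u v where "u \<in> S" "u * r = v * s'" using ore[OF s(2)] by blast
  ultimately show ?thesis using left_loc_mult loc_class_closed mult_mem by simp
qed

lemma left_loc_m_assoc:
  assumes "X \<in> carrier L" "Y \<in> carrier L" "Z \<in> carrier L"
  shows "X \<otimes>\<^bsub>L\<^esub> Y \<otimes>\<^bsub>L\<^esub> Z = X \<otimes>\<^bsub>L\<^esub> (Y \<otimes>\<^bsub>L\<^esub> Z)"
proof -
  obtain s1 r1 where s1: "s1 \<in> S" and X: "X = loc_class S s1 r1" using assms(1) by (rule left_loc_cases)
  obtain s2 r2 where s2: "s2 \<in> S" and Y: "Y = loc_class S s2 r2" using assms(2) by (rule left_loc_cases)
  obtain s3 r3 where s3: "s3 \<in> S" and Z: "Z = loc_class S s3 r3" using assms(3) by (rule left_loc_cases)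
  obtain u v where u: "u \<in> S" and uv: "u * r2 = v * s3" using ore[OF s3] by blast
  have us2: "u * s2 \<in> S" using u s2 mult_mem by blast
  obtain w z where w: "w \<in> S" and wz: "w * r1 = z * (u * s2)" using ore[OF us2] by blast
  have ws1: "w * s1 \<in> S" using w s1 mult_mem by blast
  have "X \<otimes>\<^bsub>L\<^esub> (Y \<otimes>\<^bsub>L\<^esub> Z) = loc_class S (w * s1) (z * (v * r3))"
    unfolding X Y Z left_loc_mult[OF s2 s3 u uv] using left_loc_mult[OF s1 us2 w wz] .
  moreover have "X \<otimes>\<^bsub>L\<^esub> Y = loc_class S (w * s1) ((z * u) * r2)"
    unfolding X Y using left_loc_mult[OF s1 s2 w, of r1 "z * u" r2] wz by (simp add: mult.assoc)
  moreover have "loc_class S (w * s1) ((z * u) * r2) \<otimes>\<^bsub>L\<^esub> Z = loc_class S (w * s1) ((z * v) * r3)"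
    unfolding Z using left_loc_mult[OF ws1 s3 one_mem, of "(z * u) * r2" "z * v"] uv
    by (simp add: mult.assoc)
  ultimately show ?thesis by (simp add: mult.assoc)
qed

lemma monoid_left_loc: "monoid L"
proof (rule monoidI)
  show "\<one>\<^bsub>L\<^esub> \<in> carrier L" using left_loc_one[OF one_mem] loc_class_closed[OF one_mem] by simp
  fix X assume "X \<in> carrier L"
  then obtain s r where s: "s \<in> S" and X: "X = loc_class S s r" by (rule left_loc_cases)
  show "\<one>\<^bsub>L\<^esub> \<otimes>\<^bsub>L\<^esub> X = X" using X left_loc_mult[OF one_mem s s, of 1 1 r] by (simp add: left_loc_one[OF one_mem])
  show "X \<otimes>\<^bsub>L\<^esub> \<one>\<^bsub>L\<^esub> = X" using X left_loc_mult[OF s one_mem one_mem, of r r 1] by (simp add: left_loc_one[OF one_mem])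
qed (simp_all add: left_loc_m_closed left_loc_m_assoc)

lemma left_loc_r_distr:
  assumes "X \<in> carrier L" "Y \<in> carrier L" "Z \<in> carrier L"
  shows "(X \<oplus>\<^bsub>L\<^esub> Y) \<otimes>\<^bsub>L\<^esub> Z = X \<otimes>\<^bsub>L\<^esub> Z \<oplus>\<^bsub>L\<^esub> Y \<otimes>\<^bsub>L\<^esub> Z"
proof -
  obtain s x y where s: "s \<in> S" and X: "X = loc_class S s x" and Y: "Y = loc_class S s y"
    using assms(1,2) by (rule left_loc_common_denom)
  obtain s' r' where s': "s' \<in> S" and Z: "Z = loc_class S s' r'" using assms(3) by (rule left_loc_cases)
  obtain u1 v1 where u1: "u1 \<in> S" and uv1: "u1 * x = v1 * s'" using ore[OF s'] by blast
  obtain u2 v2 where u2: "u2 \<in> S" and uv2: "u2 * (u1 * y) = v2 * s'" using ore[OF s'] by blast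
  have u: "u2 * u1 \<in> S" using u1 u2 mult_mem by blast
  have "X \<otimes>\<^bsub>L\<^esub> Z = loc_class S ((u2 * u1) * s) ((u2 * v1) * r')"
    unfolding X Z by (rule left_loc_mult[OF s s' u]) (simp add: mult.assoc uv1)
  moreover have "Y \<otimes>\<^bsub>L\<^esub> Z = loc_class S ((u2 * u1) * s) (v2 * r')"
    unfolding Y Z by (rule left_loc_mult[OF s s' u]) (simp add: mult.assoc uv2)
  moreover have "loc_class S s (x + y) \<otimes>\<^bsub>L\<^esub> Z = loc_class S ((u2 * u1) * s) ((u2 * v1 + v2) * r')"
    unfolding Z by (rule left_loc_mult[OF s s' u])
      (simp add: distrib_left distrib_right mult.assoc uv1 uv2[simplified mult.assoc])
  moreover have "(u2 * u1) * s \<in> S" using u s mult_mem by blast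
  ultimately show ?thesis by (simp add: X Y left_loc_add_same_denom s distrib_right)
qed

lemma left_loc_l_distr:
  assumes "X \<in> carrier L" "Y \<in> carrier L" "Z \<in> carrier L"
  shows "Z \<otimes>\<^bsub>L\<^esub> (X \<oplus>\<^bsub>L\<^esub> Y) = Z \<otimes>\<^bsub>L\<^esub> X \<oplus>\<^bsub>L\<^esub> Z \<otimes>\<^bsub>L\<^esub> Y"
proof -
  obtain s' x y where s': "s' \<in> S" and X: "X = loc_class S s' x" and Y: "Y = loc_class S s' y"
    using assms(1,2) by (rule left_loc_common_denom)
  obtain s r where s: "s \<in> S" and Z: "Z = loc_class S s r" using assms(3) by (rule left_loc_cases)
  obtain u v where u: "u \<in> S" and uv: "u * r = v * s'" using ore[OF s'] by blast
  have "u * s \<in> S" using u s mult_mem by blast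
  then show ?thesis
    using left_loc_mult[OF s s' u uv] by (simp add: X Y Z left_loc_add_same_denom s' distrib_left)
qed

lemma ring_left_loc: "ring L"
  by (rule ringI[OF abelian_group_left_loc monoid_left_loc left_loc_r_distr left_loc_l_distr])

subsection \<open>The canonical map \<open>R \<rightarrow> S\<^sup>-\<^sup>1R\<close>\<close>

lemma embed_eq_iff: "embed a = embed b \<longleftrightarrow> (\<exists>e\<in>S. e * a = e * b)"
  by (auto simp: loc_class_eq_iff[OF one_mem one_mem] loc_rel_iff one_mem intro: loc_class_eqI)

lemma embed_eq_zero_iff: "embed r = \<zero>\<^bsub>L\<^esub> \<longleftrightarrow> r \<in> ass S"
  by (simp add: left_loc_zero[OF one_mem] embed_eq_iff ass_def)

lemma loc_class_eq_zero: "s \<in> S \<Longrightarrow> r \<in> ass S \<Longrightarrow> loc_class S s r = \<zero>\<^bsub>L\<^esub>"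
proof -
  assume s: "s \<in> S" and "r \<in> ass S"
  then obtain e where e: "e \<in> S" "e * r = 0" by (auto simp: ass_def)
  then have es: "e * s \<in> S" using s mult_mem by blast
  have "loc_class S s r = loc_class S (e * s) (e * r)" using loc_class_scale[OF s es] by simp
  with e es show ?thesis by (simp add: left_loc_zero[OF es])
qed

lemma embed_closed: "embed r \<in> carrier L"
  by (rule loc_class_closed[OF one_mem])

lemma embed_mult: "embed a \<otimes>\<^bsub>L\<^esub> embed b = embed (a * b)"
  using left_loc_mult[OF one_mem one_mem one_mem, of a a b] by simp

lemma embed_mult_loc_class: "s \<in> S \<Longrightarrow> embed s \<otimes>\<^bsub>L\<^esub> loc_class S s x = embed x"
  using left_loc_mult[OF one_mem _ one_mem, of s s 1 x] by simp

lemma left_loc_one_neq_zero: "\<one>\<^bsub>L\<^esub> \<noteq> \<zero>\<^bsub>L\<^esub>"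
  using embed_eq_zero_iff[of 1] S_disjoint_ass one_mem by (auto simp: left_loc_one[OF one_mem])

lemma zero_not_in_Units_left_loc: "\<zero>\<^bsub>L\<^esub> \<notin> Units L"
proof
  interpret ring L by (rule ring_left_loc)
  assume unit: "\<zero>\<^bsub>L\<^esub> \<in> Units L"
  then have "\<one>\<^bsub>L\<^esub> = inv\<^bsub>L\<^esub> \<zero>\<^bsub>L\<^esub> \<otimes>\<^bsub>L\<^esub> \<zero>\<^bsub>L\<^esub>"
    by (rule Units_l_inv[symmetric])
  also have "\<dots> = \<zero>\<^bsub>L\<^esub>" using unit by simp
  finally show False using left_loc_one_neq_zero by simp
qed

lemma embed_unit_if_mem: "s \<in> S \<Longrightarrow> embed s \<in> Units L"
proof -
  assume s: "s \<in> S"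
  have "embed s \<otimes>\<^bsub>L\<^esub> loc_class S s 1 = \<one>\<^bsub>L\<^esub>"
    using embed_mult_loc_class[OF s] by (simp add: left_loc_one[OF one_mem])
  moreover have "loc_class S s 1 \<otimes>\<^bsub>L\<^esub> embed s = \<one>\<^bsub>L\<^esub>"
    using left_loc_mult[OF s one_mem one_mem, of 1 1 s] by (simp add: left_loc_one[OF s])
  ultimately show ?thesis using embed_closed loc_class_closed[OF s] by (auto simp: Units_def)
qed

lemma embed_unit_ore:
  assumes "embed t \<in> Units L"
  shows "\<exists>s\<in>S. \<exists>x. s * r = x * t"
proof -
  interpret ring L by (rule ring_left_loc)
  define X where "X = embed r \<otimes>\<^bsub>L\<^esub> inv\<^bsub>L\<^esub> (embed t)"
  have X: "X \<in> carrier L" unfolding X_def using assms embed_closed by simp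
  then obtain s x where s: "s \<in> S" and Xs: "X = loc_class S s x" by (rule left_loc_cases)
  have "embed (s * r) = embed s \<otimes>\<^bsub>L\<^esub> (X \<otimes>\<^bsub>L\<^esub> embed t)"
    unfolding X_def using assms embed_closed by (simp add: m_assoc embed_mult)
  also have "\<dots> = embed (x * t)"
    using X s embed_closed by (simp add: m_assoc[symmetric] Xs embed_mult_loc_class embed_mult)
  finally obtain e where "e \<in> S" "e * (s * r) = e * (x * t)" using embed_eq_iff by blast
  then have "e * s \<in> S" "(e * s) * r = (e * x) * t" using s mult_mem by (simp_all add: mult.assoc)
  then show ?thesis by blast
qed

lemma embed_unit_annihilator:
  assumes "embed t \<in> Units L" "r * t = 0"
  shows "r \<in> ass S"
proof -
  interpret ring L by (rule ring_left_loc)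
  have "embed r = embed r \<otimes>\<^bsub>L\<^esub> (embed t \<otimes>\<^bsub>L\<^esub> inv\<^bsub>L\<^esub> (embed t))"
    using assms(1) embed_closed by simp
  also have "\<dots> = embed (r * t) \<otimes>\<^bsub>L\<^esub> inv\<^bsub>L\<^esub> (embed t)"
    using assms(1) embed_closed by (simp add: m_assoc flip: embed_mult)
  also have "\<dots> = \<zero>\<^bsub>L\<^esub>" using assms by (simp add: left_loc_zero[OF one_mem, symmetric])
  finally show ?thesis by (simp add: embed_eq_zero_iff)
qed

lemma left_den_embed_units: "left_den {r. embed r \<in> Units L}"
  unfolding left_den_def left_ore_def mult_subset_def
proof (intro conjI allI ballI impI)
  interpret ring L by (rule ring_left_loc)
  show "1 \<in> {r. embed r \<in> Units L}" using left_loc_one[OF one_mem] Units_one_closed by simp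
  show "0 \<notin> {r. embed r \<in> Units L}" using zero_not_in_Units_left_loc left_loc_zero[OF one_mem] by simp
  show "a * b \<in> {r. embed r \<in> Units L}" if "a \<in> {r. embed r \<in> Units L}" "b \<in> {r. embed r \<in> Units L}" for a b
    using that Units_m_closed by (simp add: embed_mult[symmetric])
  show "\<exists>s\<in>{r. embed r \<in> Units L}. \<exists>x. s * r = x * t" if "t \<in> {r. embed r \<in> Units L}" for r t
    using that embed_unit_ore embed_unit_if_mem by blast
  show "\<exists>s\<in>{r. embed r \<in> Units L}. s * r = 0"
    if "t \<in> {r. embed r \<in> Units L} \<and> r * t = 0" for r t
    using that embed_unit_annihilator embed_unit_if_mem by (fastforce simp: ass_def)
qed

lemma embed_units_eq_if_division_ring:
  assumes "division_ring L"
  shows "{r. embed r \<in> Units L} = - ass S"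
proof (intro equalityI subsetI)
  fix r assume "r \<in> {r. embed r \<in> Units L}"
  then show "r \<in> - ass S" using zero_not_in_Units_left_loc embed_eq_zero_iff by (metis ComplI mem_Collect_eq)
next
  fix r assume "r \<in> - ass S"
  then have "embed r \<in> carrier L - {\<zero>\<^bsub>L\<^esub>}" using embed_closed embed_eq_zero_iff by auto
  then show "r \<in> {r. embed r \<in> Units L}" using assms by (simp add: division_ring_def)
qed

lemma division_ring_left_loc:
  assumes "UNIV = S \<union> ass S"
  shows "division_ring L"
  unfolding division_ring_def
proof (intro conjI ballI ring_left_loc left_loc_one_neq_zero)
  fix X assume X: "X \<in> carrier L - {\<zero>\<^bsub>L\<^esub>}"
  then have "X \<in> carrier L" by blast
  then obtain s r where s: "s \<in> S" and Xs: "X = loc_class S s r" by (rule left_loc_cases)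
  then have "r \<notin> ass S" using X loc_class_eq_zero by auto
  then have r: "r \<in> S" using assms by blast
  have "loc_class S r s \<otimes>\<^bsub>L\<^esub> X = \<one>\<^bsub>L\<^esub>"
    using left_loc_mult[OF r s one_mem, of s 1 r] by (simp add: Xs left_loc_one[OF r])
  moreover have "X \<otimes>\<^bsub>L\<^esub> loc_class S r s = \<one>\<^bsub>L\<^esub>"
    using left_loc_mult[OF s r one_mem, of r 1 s] by (simp add: Xs left_loc_one[OF s])
  ultimately show "X \<in> Units L" using X loc_class_closed[OF r] by (auto simp: Units_def)
qed

end

theorem lemma3p4:
  fixes S :: "'a::ring_1 set"
  assumes "S \<in> maxDen_l"
  shows "division_ring (left_loc S) \<longleftrightarrow> UNIV = S \<union> ass S"
proof -
  have "left_den S" and maximal: "\<And>T. left_den T \<Longrightarrow> S \<subseteq> T \<Longrightarrow> T = S"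
    using assms by (auto simp: maxDen_l_def)
  interpret left_denominator_set S by standard fact
  show ?thesis
  proof
    assume "division_ring (left_loc S)"
    then have "{r. embed r \<in> Units (left_loc S)} = - ass S" by (rule embed_units_eq_if_division_ring)
    moreover have "{r. embed r \<in> Units (left_loc S)} = S"
      using maximal left_den_embed_units embed_unit_if_mem by blast
    ultimately show "UNIV = S \<union> ass S" by blast
  qed (rule division_ring_left_loc)
qed

end
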